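(* Let $f:\mathbb{N}\rightharpoonup\mathbb{N}$ be a partial function. Then the pca $\mathcal{K}_1^f$ is isomorphic to the pca $\mathcal{K}_1[f]$.
   Context: $\mathcal{K}_1$ is Kleene's first pca: underlying set $\mathbb{N}$, application $nm\simeq\varphi_n(m)$ where $\varphi_n$ is the $n$-th partial recursive function. $\mathcal{K}_1^f$ is the pca on $\mathbb{N}$ with application $nm\simeq\varphi^f_n(m)$, where $\varphi^f_n$ is the $n$-th partial function computable with an oracle for $f$. A pca is a set with a partial binary application admitting $K,S$ with $Kab=a$, $Sab{\downarrow}$, $Sabc\simeq ac(bc)$; each pca has fixed Booleans $\top,\bot$, pairing $p$ with projections $p_0,p_1$, and a coding $[u_0,\dots,u_{n-1}]$ of finite sequences with concatenation $\ast$. For a pca $A$ and partial $f:A\rightharpoonup A$, the pca $A[f]$ has underlying set $A$; an $f$-dialogue between $a,b$ is a code $u=[u_0,\dots,u_{n-1}]$ such that for each $i<n$ there is $v_i$ with $a\cdot([b]\ast[u_0,\dots,u_{i-1}])=p\bot v_i$ and $f(v_i)$ defined and equal to $u_i$; and $a\cdot^f b=c$ iff there is an $f$-dialogue $u$ between $a,b$ with $a\cdot([b]\ast u)=p\top c$. An applicative morphism $\gamma:A\to B$ is a function from $A$ to nonempty subsets of $B$ with some $r\in B$ such that $aa'{\downarrow}$, $b\in\gamma(a)$, $b'\in\gamma(a')$ imply $rbb'{\downarrow}$ and $rbb'\in\gamma(aa')$; composition is $(\delta\gamma)(a)=\bigcup_{b\in\gamma(a)}\delta(b)$, identities are $a\mapsto\{a\}$.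 Pcas $A,B$ are isomorphic if there are applicative morphisms $\gamma:A\to B$, $\delta:B\to A$ whose composites $\delta\gamma$, $\gamma\delta$ equal the identity morphisms. *)

theory Defs
  imports Main "HOL-Library.Nat_Bijection"
begin

type_synonym 'a pas = "'a \<Rightarrow> 'a \<Rightarrow> 'a option"

definition app2 :: "'a pas \<Rightarrow> 'a \<Rightarrow> 'a \<Rightarrow> 'a \<Rightarrow> 'a option" where
  "app2 app a b c = Option.bind (app a b) (\<lambda>d. app d c)"

definition is_pca :: "'a pas \<Rightarrow> bool" where
  "is_pca app \<longleftrightarrow> (\<exists>k s. (\<forall>a b. app2 app k a b = Some a)
                       \<and> (\<forall>a b. app2 app s a b \<noteq> None)
                       \<and> (\<forall>a b c. Option.bind (app2 app s a b) (\<lambda>d. app d c)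
                                 = Option.bind (app a c) (\<lambda>x. Option.bind (app b c) (\<lambda>y. app x y))))"

definition applicative_morphism :: "'a pas \<Rightarrow> 'b pas \<Rightarrow> ('a \<Rightarrow> 'b set) \<Rightarrow> bool" where
  "applicative_morphism appA appB \<gamma> \<longleftrightarrow>
     (\<forall>a. \<gamma> a \<noteq> {}) \<and>
     (\<exists>r. \<forall>a a' b b' c. appA a a' = Some c \<longrightarrow> b \<in> \<gamma> a \<longrightarrow> b' \<in> \<gamma> a' \<longrightarrow>
            (\<exists>d. app2 appB r b b' = Some d \<and> d \<in> \<gamma> c))"

definition morph_comp :: "('b \<Rightarrow> 'c set) \<Rightarrow> ('a \<Rightarrow> 'b set) \<Rightarrow> ('a \<Rightarrow> 'c set)" where
  "morph_comp \<delta> \<gamma> = (\<lambda>a. \<Union>b\<in>\<gamma> a. \<delta> b)"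

definition pca_isomorphic :: "'a pas \<Rightarrow> 'b pas \<Rightarrow> bool" where
  "pca_isomorphic appA appB \<longleftrightarrow>
     (\<exists>\<gamma> \<delta>. applicative_morphism appA appB \<gamma> \<and> applicative_morphism appB appA \<delta> \<and>
            morph_comp \<delta> \<gamma> = (\<lambda>a. {a}) \<and> morph_comp \<gamma> \<delta> = (\<lambda>b. {b}))"

text \<open>The fixed Booleans T (top), F (bot), pairing p, and sequence coding enc
  (enc [u0,...,u(n-1)] is the code [u0,...,u(n-1)]); then [b] * [u0,...,u(i-1)]
  is enc (b # [u0,...,u(i-1)]).\<close>

definition is_dialogue :: "'a pas \<Rightarrow> ('a \<Rightarrow> 'a option) \<Rightarrow> 'a \<Rightarrow> 'a \<Rightarrow> ('a list \<Rightarrow> 'a)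
                            \<Rightarrow> 'a \<Rightarrow> 'a \<Rightarrow> 'a list \<Rightarrow> bool" where
  "is_dialogue app f F p enc a b us \<longleftrightarrow>
     (\<forall>i < length us. \<exists>v. app a (enc (b # take i us)) = app2 app p F v \<and> f v = Some (us ! i))"

definition rel_app_rel :: "'a pas \<Rightarrow> ('a \<Rightarrow> 'a option) \<Rightarrow> 'a \<Rightarrow> 'a \<Rightarrow> 'a \<Rightarrow> ('a list \<Rightarrow> 'a)
                            \<Rightarrow> 'a \<Rightarrow> 'a \<Rightarrow> 'a \<Rightarrow> bool" where
  "rel_app_rel app f T F p enc a b c \<longleftrightarrow>
     (\<exists>us. is_dialogue app f F p enc a b us \<and> app a (enc (b # us)) = app2 app p T c)"

definition rel_app :: "'a pas \<Rightarrow> ('a \<Rightarrow> 'a option) \<Rightarrow> 'a \<Rightarrow> 'a \<Rightarrow> 'a \<Rightarrow> ('a list \<Rightarrow> 'a) \<Rightarrow> 'a pas" where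
  "rel_app app f T F p enc a b =
     (if \<exists>c. rel_app_rel app f T F p enc a b c
      then Some (THE c. rel_app_rel app f T F p enc a b c) else None)"

datatype rf = Zer | Succ | Fst | Snd | Orc | Comp rf rf | Pair rf rf | Rec rf rf | Mu rf

inductive rf_eval :: "(nat \<Rightarrow> nat option) \<Rightarrow> rf \<Rightarrow> nat \<Rightarrow> nat \<Rightarrow> bool" for f where
  "rf_eval f Zer x 0"
| "rf_eval f Succ x (Suc x)"
| "rf_eval f Fst x (fst (prod_decode x))"
| "rf_eval f Snd x (snd (prod_decode x))"
| "f x = Some y \<Longrightarrow> rf_eval f Orc x y"
| "rf_eval f h x y \<Longrightarrow> rf_eval f g y z \<Longrightarrow> rf_eval f (Comp g h) x z"
| "rf_eval f g x y \<Longrightarrow> rf_eval f h x z \<Longrightarrow> rf_eval f (Pair g h) x (prod_encode (y, z))"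
| "rf_eval f g x y \<Longrightarrow> rf_eval f (Rec g h) (prod_encode (x, 0)) y"
| "rf_eval f (Rec g h) (prod_encode (x, n)) y \<Longrightarrow> rf_eval f h (prod_encode (x, prod_encode (n, y))) z
     \<Longrightarrow> rf_eval f (Rec g h) (prod_encode (x, Suc n)) z"
| "rf_eval f g (prod_encode (x, n)) 0 \<Longrightarrow> (\<forall>k<n. \<exists>y. y \<noteq> 0 \<and> rf_eval f g (prod_encode (x, k)) y)
     \<Longrightarrow> rf_eval f (Mu g) x n"

lemma fst_prod_decode_le: "fst (prod_decode a) \<le> a"
  by (metis le_prod_encode_1 prod.collapse prod_decode_inverse)

lemma snd_prod_decode_le: "snd (prod_decode a) \<le> a"
  by (metis le_prod_encode_2 prod.collapse prod_decode_inverse)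

function rf_decode :: "nat \<Rightarrow> rf" where
  "rf_decode n =
     (if n mod 9 = 0 then Zer
      else if n mod 9 = 1 then Succ
      else if n mod 9 = 2 then Fst
      else if n mod 9 = 3 then Snd
      else if n mod 9 = 4 then Orc
      else if n mod 9 = 5 then Comp (rf_decode (fst (prod_decode (n div 9)))) (rf_decode (snd (prod_decode (n div 9))))
      else if n mod 9 = 6 then Pair (rf_decode (fst (prod_decode (n div 9)))) (rf_decode (snd (prod_decode (n div 9))))
      else if n mod 9 = 7 then Rec (rf_decode (fst (prod_decode (n div 9)))) (rf_decode (snd (prod_decode (n div 9))))
      else Mu (rf_decode (n div 9)))"
  by auto
lemma rf_decode_lt: "n mod 9 \<noteq> 0 \<Longrightarrow> n div 9 < (n::nat)"
  by (cases "n = 0") auto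

termination
  apply (relation "measure id")
  apply (simp_all add: rf_decode_lt)
  by (metis fst_prod_decode_le snd_prod_decode_le rf_decode_lt le_less_trans
        zero_neq_numeral)+

definition phi :: "(nat \<Rightarrow> nat option) \<Rightarrow> nat \<Rightarrow> nat \<Rightarrow> nat option" where
  "phi f n m = (if \<exists>y. rf_eval f (rf_decode n) m y then Some (THE y. rf_eval f (rf_decode n) m y) else None)"

definition K1f :: "(nat \<Rightarrow> nat option) \<Rightarrow> nat pas" where
  "K1f f = (\<lambda>n m. phi f n m)"

definition K1 :: "nat pas" where
  "K1 = K1f (\<lambda>_. None)"

definition K1_structure :: "nat \<Rightarrow> nat \<Rightarrow> nat \<Rightarrow> (nat list \<Rightarrow> nat) \<Rightarrow> bool" where
  "K1_structure T F p enc \<longleftrightarrow>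
     (\<forall>x y. app2 K1 T x y = Some x) \<and> (\<forall>x y. app2 K1 F x y = Some y) \<and>
     (\<forall>x y. app2 K1 p x y \<noteq> None) \<and>
     (\<exists>p0 p1. \<forall>x y z. app2 K1 p x y = Some z \<longrightarrow> K1 p0 z = Some x \<and> K1 p1 z = Some y) \<and>
     inj enc \<and>
     (\<exists>lh. \<forall>us. K1 lh (enc us) = Some (length us)) \<and>
     (\<exists>pr. \<forall>us i. i < length us \<longrightarrow> app2 K1 pr (enc us) i = Some (us ! i)) \<and>
     (\<exists>sn. \<forall>us x. app2 K1 sn (enc us) x = Some (enc (us @ [x])))"

end

theory Submission
  imports Defs
begin

(* Both applicative morphisms are the identity on indices; only their realizers need work.

   An application a \<cdot>f b = c in K1[f] is a finite dialogue, which a program with oracle f can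
   conduct itself: it asks a (through a universal function for K1) for its next query, answers
   it with f, and stops at the first reply \<langle>T, c\<rangle>.

   Conversely, a computation of phi^f_a(b) consults f at only finitely many arguments, so K1 can
   replay it with an interpreter that receives the oracle answers as a finite table.  Given the
   dialogue so far, the K1-program reruns the interpreter on the answers received and replies
   \<langle>F, v\<rangle> if it gets stuck on a new query v, or \<langle>T, y\<rangle> once it returns y.  Each new query
   lies in the finite set consulted by the computation and outside the current table, so the
   dialogue ends.  In both directions the realizer comes from the s-m-n theorem. *)

abbreviation npair :: "nat \<Rightarrow> nat \<Rightarrow> nat" (\<open>\<langle>_,/ _\<rangle>\<close>)
  where "\<langle>a, b\<rangle> \<equiv> prod_encode (a, b)"
abbreviation nfst :: "nat \<Rightarrow> nat" where "nfst z \<equiv> fst (prod_decode z)"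
abbreviation nsnd :: "nat \<Rightarrow> nat" where "nsnd z \<equiv> snd (prod_decode z)"

lemma nfst_npair [simp]: "nfst \<langle>a, b\<rangle> = a"
  by (simp add: prod_encode_inverse)

lemma nsnd_npair [simp]: "nsnd \<langle>a, b\<rangle> = b"
  by (simp add: prod_encode_inverse)

lemma npair_nfst_nsnd [simp]: "\<langle>nfst z, nsnd z\<rangle> = z"
  by (simp add: prod_decode_inverse)

lemmas rf_eval_Zer = rf_eval.intros(1)
  and rf_eval_Succ = rf_eval.intros(2)
  and rf_eval_Fst = rf_eval.intros(3)
  and rf_eval_Snd = rf_eval.intros(4)
  and rf_eval_Orc = rf_eval.intros(5)
  and rf_eval_Comp = rf_eval.intros(6)
  and rf_eval_Pair = rf_eval.intros(7)
  and rf_eval_Rec0 = rf_eval.intros(8)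
  and rf_eval_RecS = rf_eval.intros(9)
  and rf_eval_Mu = rf_eval.intros(10)

lemma rf_eval_functional:
  assumes "rf_eval f c x y" and "rf_eval f c x y'"
  shows "y = y'"
  using assms
proof (induction arbitrary: y' rule: rf_eval.induct)
  case (10 g x n)
  from "10.prems" obtain n' where n': "y' = n'" "rf_eval f g \<langle>x, n'\<rangle> 0"
    "\<forall>k<n'. \<exists>y. y \<noteq> 0 \<and> rf_eval f g \<langle>x, k\<rangle> y"
    by (cases rule: rf_eval.cases) auto
  show ?case
  proof (rule linorder_cases[of n n'])
    assume "n < n'"
    with n' obtain y where "y \<noteq> 0" "rf_eval f g \<langle>x, n\<rangle> y" by blast
    with "10.IH"(1) show ?case by fastforce
  next
    assume "n' < n"
    with "10.IH"(2) obtain y where "y \<noteq> 0" "\<forall>z. rf_eval f g \<langle>x, n'\<rangle> z \<longrightarrow> y = z" by blast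
    with n' show ?case by auto
  qed (use n' in simp)
next
  case (5 x y) from "5.prems" "5.hyps" show ?case by (cases rule: rf_eval.cases) auto
next
  case (6 h x y g z) from "6.prems" show ?case
    by (cases rule: rf_eval.cases) (use "6.IH" in blast)+
next
  case (7 g x y h z) from "7.prems" show ?case
    by (cases rule: rf_eval.cases) (use "7.IH" in fastforce)+
next
  case (8 g x y h) from "8.prems" show ?case
    by (cases rule: rf_eval.cases) (use "8.IH" in fastforce)+
next
  case (9 g h x n y z) from "9.prems" show ?case
    by (cases rule: rf_eval.cases) (use "9.IH" in fastforce)+
qed (erule rf_eval.cases; simp)+

lemma rf_eval_Pair_Fst_Snd: "rf_eval f (Pair Fst Snd) x x"
  by (metis npair_nfst_nsnd rf_eval_Fst rf_eval_Pair rf_eval_Snd)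

lemma rf_eval_pair_input:
  "rf_eval f c x y \<Longrightarrow> rf_eval f (Pair (Pair Fst Snd) c) x \<langle>x, y\<rangle>"
  by (rule rf_eval_Pair[OF rf_eval_Pair_Fst_Snd])

fun rf_encode :: "rf \<Rightarrow> nat" where
  "rf_encode Zer = 0"
| "rf_encode Succ = 1"
| "rf_encode Fst = 2"
| "rf_encode Snd = 3"
| "rf_encode Orc = 4"
| "rf_encode (Comp g h) = 5 + 9 * \<langle>rf_encode g, rf_encode h\<rangle>"
| "rf_encode (Pair g h) = 6 + 9 * \<langle>rf_encode g, rf_encode h\<rangle>"
| "rf_encode (Rec g h) = 7 + 9 * \<langle>rf_encode g, rf_encode h\<rangle>"
| "rf_encode (Mu g) = 8 + 9 * rf_encode g"

declare rf_decode.simps [simp del]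

lemma rf_decode_encode [simp]: "rf_decode (rf_encode c) = c"
  by (induction c) (subst rf_decode.simps; simp)+

lemma rf_decode_ZerD: "rf_decode c = Zer \<Longrightarrow> c mod 9 = 0"
  and rf_decode_SuccD: "rf_decode c = Succ \<Longrightarrow> c mod 9 = 1"
  and rf_decode_FstD: "rf_decode c = Fst \<Longrightarrow> c mod 9 = 2"
  and rf_decode_SndD: "rf_decode c = Snd \<Longrightarrow> c mod 9 = 3"
  and rf_decode_OrcD: "rf_decode c = Orc \<Longrightarrow> c mod 9 = 4"
  and rf_decode_CompD: "rf_decode c = Comp g h \<Longrightarrow>
    c mod 9 = 5 \<and> rf_decode (nfst (c div 9)) = g \<and> rf_decode (nsnd (c div 9)) = h"
  and rf_decode_PairD: "rf_decode c = Pair g h \<Longrightarrow>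
    c mod 9 = 6 \<and> rf_decode (nfst (c div 9)) = g \<and> rf_decode (nsnd (c div 9)) = h"
  and rf_decode_RecD: "rf_decode c = Rec g h \<Longrightarrow>
    c mod 9 = 7 \<and> rf_decode (nfst (c div 9)) = g \<and> rf_decode (nsnd (c div 9)) = h"
  and rf_decode_MuD: "rf_decode c = Mu g \<Longrightarrow> c mod 9 = 8 \<and> rf_decode (c div 9) = g"
  using rf_decode.simps[of c] by (auto split: if_splits)

lemma phi_eqI: "rf_eval f (rf_decode n) x y \<Longrightarrow> phi f n x = Some y"
  unfolding phi_def using rf_eval_functional by (auto intro: the_equality)

lemma phi_SomeD: "phi f n x = Some y \<Longrightarrow> rf_eval f (rf_decode n) x y"
  unfolding phi_def by (auto split: if_splits) (metis rf_eval_functional theI)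

definition total_rec :: "(nat \<Rightarrow> nat) \<Rightarrow> bool" where
  "total_rec G \<longleftrightarrow> (\<exists>c. \<forall>f x. rf_eval f c x (G x))"

text \<open>The program must converge to G f x where G f x is defined, and may converge elsewhere.\<close>

definition oracle_rec :: "((nat \<Rightarrow> nat option) \<Rightarrow> nat \<Rightarrow> nat option) \<Rightarrow> bool" where
  "oracle_rec G \<longleftrightarrow> (\<exists>c. \<forall>f x y. G f x = Some y \<longrightarrow> rf_eval f c x y)"

definition rec_pred :: "(nat \<Rightarrow> bool) \<Rightarrow> bool" where
  "rec_pred P \<longleftrightarrow> (\<exists>X. total_rec X \<and> (\<forall>x. P x \<longleftrightarrow> X x = 0))"

lemma total_rec_id: "total_rec (\<lambda>x. x)"
  unfolding total_rec_def by (blast intro: rf_eval_Pair_Fst_Snd)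

lemma total_rec_Suc: "total_rec A \<Longrightarrow> total_rec (\<lambda>x. Suc (A x))"
  unfolding total_rec_def by (blast intro: rf_eval_Comp rf_eval_Succ)

lemma total_rec_const: "total_rec (\<lambda>x. k)"
proof (induction k)
  case 0 show ?case unfolding total_rec_def by (blast intro: rf_eval_Zer)
qed (rule total_rec_Suc)

lemma total_rec_nfst: "total_rec A \<Longrightarrow> total_rec (\<lambda>x. nfst (A x))"
  unfolding total_rec_def by (blast intro: rf_eval_Comp rf_eval_Fst)

lemma total_rec_nsnd: "total_rec A \<Longrightarrow> total_rec (\<lambda>x. nsnd (A x))"
  unfolding total_rec_def by (blast intro: rf_eval_Comp rf_eval_Snd)

lemma total_rec_npair: "total_rec A \<Longrightarrow> total_rec B \<Longrightarrow> total_rec (\<lambda>x. \<langle>A x, B x\<rangle>)"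
  unfolding total_rec_def by (blast intro: rf_eval_Pair)

lemma total_rec_comp: "total_rec G \<Longrightarrow> total_rec A \<Longrightarrow> total_rec (\<lambda>x. G (A x))"
  unfolding total_rec_def by (blast intro: rf_eval_Comp)

lemma total_rec_comp2:
  "total_rec (\<lambda>z. G (nfst z) (nsnd z)) \<Longrightarrow> total_rec A \<Longrightarrow> total_rec B \<Longrightarrow>
   total_rec (\<lambda>x. G (A x) (B x))"
  using total_rec_comp[of "\<lambda>z. G (nfst z) (nsnd z)" "\<lambda>x. \<langle>A x, B x\<rangle>"] total_rec_npair by simp

lemma total_rec_funpow:
  assumes "total_rec N" "total_rec A" "total_rec (\<lambda>z. S (nfst z) (nsnd z))"
  shows "total_rec (\<lambda>x. (S x ^^ N x) (A x))"
proof -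
  obtain cn ca cs where n: "\<And>f x. rf_eval f cn x (N x)" and a: "\<And>f x. rf_eval f ca x (A x)"
    and s: "\<And>f z. rf_eval f cs z (S (nfst z) (nsnd z))"
    using assms unfolding total_rec_def by metis
  define h where "h = Comp cs (Pair Fst (Comp Snd Snd))"
  have h: "rf_eval f h \<langle>x, \<langle>k, y\<rangle>\<rangle> (S x y)" for f x k y
  proof -
    have "rf_eval f (Pair Fst (Comp Snd Snd)) \<langle>x, \<langle>k, y\<rangle>\<rangle> \<langle>x, y\<rangle>"
      by (metis rf_eval_Comp rf_eval_Fst rf_eval_Pair rf_eval_Snd nfst_npair nsnd_npair)
    with s[of f "\<langle>x, y\<rangle>"] show ?thesis unfolding h_def by (auto intro: rf_eval_Comp)
  qed
  have "rf_eval f (Rec ca h) \<langle>x, n\<rangle> ((S x ^^ n) (A x))" for f x n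
    by (induction n) (auto intro: rf_eval_Rec0 rf_eval_RecS a h)
  then have "rf_eval f (Comp (Rec ca h) (Pair (Pair Fst Snd) cn)) x ((S x ^^ N x) (A x))" for f x
    by (blast intro: rf_eval_Comp rf_eval_pair_input n)
  then show ?thesis unfolding total_rec_def by blast
qed

lemma total_rec_if_zero:
  assumes "total_rec N" "total_rec A" "total_rec B"
  shows "total_rec (\<lambda>x. if N x = 0 then A x else B x)"
proof -
  have "((\<lambda>s. b) ^^ n) a = (if n = 0 then a else b)" for a b :: nat and n
    by (induction n) auto
  with total_rec_funpow[of N A "\<lambda>x s. B x"] show ?thesis
    using assms total_rec_comp[of B nfst] total_rec_nfst[OF total_rec_id] by simp
qed

lemma total_rec_add: "total_rec A \<Longrightarrow> total_rec B \<Longrightarrow> total_rec (\<lambda>x. A x + B x)"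
proof -
  have "(Suc ^^ b) a = a + b" for a b by (induction b) auto
  then show "total_rec A \<Longrightarrow> total_rec B \<Longrightarrow> ?thesis"
    using total_rec_funpow[of B A "\<lambda>x s. Suc s"] total_rec_Suc[OF total_rec_nsnd[OF total_rec_id]]
    by (simp add: add.commute)
qed

lemma total_rec_mult: "total_rec A \<Longrightarrow> total_rec B \<Longrightarrow> total_rec (\<lambda>x. A x * B x)"
proof -
  have "((\<lambda>s. s + a) ^^ b) 0 = a * b" for a b :: nat by (induction b) auto
  then show "total_rec A \<Longrightarrow> total_rec B \<Longrightarrow> ?thesis"
    using total_rec_funpow[of B "\<lambda>x. 0" "\<lambda>x s. s + A x"] total_rec_const
      total_rec_add[OF total_rec_nsnd[OF total_rec_id] total_rec_comp[of A nfst]]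
      total_rec_nfst[OF total_rec_id]
    by (simp add: mult.commute)
qed

lemma total_rec_pred: "total_rec A \<Longrightarrow> total_rec (\<lambda>x. A x - 1)"
proof -
  have "((\<lambda>s. \<langle>nsnd s, Suc (nsnd s)\<rangle>) ^^ n) \<langle>0, 0\<rangle> = \<langle>n - 1, n\<rangle>" for n
    by (induction n) auto
  moreover assume "total_rec A"
  then have "total_rec (\<lambda>x. nfst (((\<lambda>s. \<langle>nsnd s, Suc (nsnd s)\<rangle>) ^^ A x) \<langle>0, 0\<rangle>))"
    by (intro total_rec_nfst total_rec_funpow total_rec_npair total_rec_const total_rec_nsnd
        total_rec_Suc total_rec_id)
  ultimately show ?thesis by simp
qed

lemma total_rec_diff: "total_rec A \<Longrightarrow> total_rec B \<Longrightarrow> total_rec (\<lambda>x. A x - B x)"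
proof -
  have "((\<lambda>s. s - 1) ^^ b) a = a - b" for a b :: nat by (induction b) auto
  then show "total_rec A \<Longrightarrow> total_rec B \<Longrightarrow> ?thesis"
    using total_rec_funpow[of B A "\<lambda>x s. s - 1"] total_rec_pred[OF total_rec_nsnd[OF total_rec_id]]
    by simp
qed

lemma total_rec_if: "rec_pred P \<Longrightarrow> total_rec A \<Longrightarrow> total_rec B \<Longrightarrow>
  total_rec (\<lambda>x. if P x then A x else B x)"
proof -
  assume "rec_pred P" "total_rec A" "total_rec B"
  then obtain X where "total_rec X" "\<forall>x. P x \<longleftrightarrow> X x = 0" unfolding rec_pred_def by blast
  with total_rec_if_zero[OF this(1) \<open>total_rec A\<close> \<open>total_rec B\<close>] show ?thesis by simp
qed

lemma rec_pred_eq: "total_rec A \<Longrightarrow> total_rec B \<Longrightarrow> rec_pred (\<lambda>x. A x = B x)"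
  unfolding rec_pred_def
  by (rule exI[of _ "\<lambda>x. (A x - B x) + (B x - A x)"]) (auto simp: total_rec_add total_rec_diff)

lemma rec_pred_conj: "rec_pred P \<Longrightarrow> rec_pred Q \<Longrightarrow> rec_pred (\<lambda>x. P x \<and> Q x)"
  unfolding rec_pred_def
proof (elim exE conjE)
  fix X Y assume "total_rec X" "\<forall>x. P x \<longleftrightarrow> X x = 0" "total_rec Y" "\<forall>x. Q x \<longleftrightarrow> Y x = 0"
  then show "\<exists>Z. total_rec Z \<and> (\<forall>x. (P x \<and> Q x) \<longleftrightarrow> Z x = 0)"
    by (intro exI[of _ "\<lambda>x. X x + Y x"]) (simp add: total_rec_add)
qed

lemma rec_pred_not: "rec_pred P \<Longrightarrow> rec_pred (\<lambda>x. \<not> P x)"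
  unfolding rec_pred_def
proof (elim exE conjE)
  fix X assume "total_rec X" "\<forall>x. P x \<longleftrightarrow> X x = 0"
  then show "\<exists>Z. total_rec Z \<and> (\<forall>x. \<not> P x \<longleftrightarrow> Z x = 0)"
    by (intro exI[of _ "\<lambda>x. if X x = 0 then 1 else 0"]) (simp add: total_rec_if_zero total_rec_const)
qed

lemma rec_pred_disj: "rec_pred P \<Longrightarrow> rec_pred Q \<Longrightarrow> rec_pred (\<lambda>x. P x \<or> Q x)"
  using rec_pred_not[OF rec_pred_conj[OF rec_pred_not rec_pred_not]] by simp

lemma
  assumes "total_rec A"
  shows total_rec_div9: "total_rec (\<lambda>x. A x div 9)" and total_rec_mod9: "total_rec (\<lambda>x. A x mod 9)"
proof -
  let ?count = "\<lambda>s. if nsnd s = 8 then \<langle>Suc (nfst s), 0\<rangle> else \<langle>nfst s, Suc (nsnd s)\<rangle>"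
  have "(?count ^^ n) \<langle>0, 0\<rangle> = \<langle>n div 9, n mod 9\<rangle>" for n
    by (induction n) (auto simp: mod_Suc div_Suc)
  moreover have "total_rec (\<lambda>x. (?count ^^ A x) \<langle>0, 0\<rangle>)"
    by (intro total_rec_funpow total_rec_npair total_rec_const total_rec_if rec_pred_eq
        total_rec_nfst total_rec_nsnd total_rec_id total_rec_Suc assms)
  ultimately have "total_rec (\<lambda>x. \<langle>A x div 9, A x mod 9\<rangle>)" by simp
  from total_rec_nfst[OF this] total_rec_nsnd[OF this]
  show "total_rec (\<lambda>x. A x div 9)" "total_rec (\<lambda>x. A x mod 9)" by simp_all
qed

lemmas total_rec_intros = total_rec_id total_rec_const total_rec_Suc total_rec_nfst total_rec_nsnd
  total_rec_npair total_rec_if rec_pred_eq rec_pred_conj rec_pred_not rec_pred_disj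
  total_rec_add total_rec_mult total_rec_diff total_rec_div9 total_rec_mod9

lemma oracle_rec_total: "total_rec G \<Longrightarrow> oracle_rec (\<lambda>f x. Some (G x))"
  unfolding total_rec_def oracle_rec_def by auto

lemma oracle_rec_comp: "oracle_rec G \<Longrightarrow> total_rec A \<Longrightarrow> oracle_rec (\<lambda>f x. G f (A x))"
  unfolding oracle_rec_def total_rec_def by (blast intro: rf_eval_Comp)

lemma oracle_rec_oracle: "total_rec A \<Longrightarrow> oracle_rec (\<lambda>f x. f (A x))"
  unfolding oracle_rec_def total_rec_def by (blast intro: rf_eval_Comp rf_eval_Orc)

lemma oracle_rec_bind:
  assumes "oracle_rec A" "oracle_rec (\<lambda>f z. B f (nfst z) (nsnd z))"
  shows "oracle_rec (\<lambda>f x. Option.bind (A f x) (B f x))"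
proof -
  obtain ca cb where a: "\<And>f x y. A f x = Some y \<Longrightarrow> rf_eval f ca x y"
    and b: "\<And>f z y. B f (nfst z) (nsnd z) = Some y \<Longrightarrow> rf_eval f cb z y"
    using assms unfolding oracle_rec_def by metis
  have "rf_eval f (Comp cb (Pair (Pair Fst Snd) ca)) x y" if "Option.bind (A f x) (B f x) = Some y"
    for f x y
  proof -
    from that obtain u where u: "A f x = Some u" "B f x u = Some y" by (cases "A f x") auto
    from a[OF u(1)] have "rf_eval f (Pair (Pair Fst Snd) ca) x \<langle>x, u\<rangle>" by (rule rf_eval_pair_input)
    moreover have "rf_eval f cb \<langle>x, u\<rangle> y" using b[of f "\<langle>x, u\<rangle>"] u(2) by simp
    ultimately show ?thesis by (rule rf_eval_Comp)
  qed
  then show ?thesis unfolding oracle_rec_def by blast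
qed

primrec bind_iter :: "(nat \<Rightarrow> nat \<Rightarrow> nat option) \<Rightarrow> nat \<Rightarrow> nat option \<Rightarrow> nat option" where
  "bind_iter S 0 a = a"
| "bind_iter S (Suc n) a = Option.bind (bind_iter S n a) (S n)"

lemma oracle_rec_bind_iter:
  assumes "oracle_rec A" "oracle_rec (\<lambda>f z. S f (nfst z) (nfst (nsnd z)) (nsnd (nsnd z)))"
    and "total_rec N"
  shows "oracle_rec (\<lambda>f x. bind_iter (S f x) (N x) (A f x))"
proof -
  obtain ca cs cn where a: "\<And>f x y. A f x = Some y \<Longrightarrow> rf_eval f ca x y"
    and s: "\<And>f z y. S f (nfst z) (nfst (nsnd z)) (nsnd (nsnd z)) = Some y \<Longrightarrow> rf_eval f cs z y"
    and n: "\<And>f x. rf_eval f cn x (N x)"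
    using assms unfolding oracle_rec_def total_rec_def by metis
  have rec: "bind_iter (S f x) k (A f x) = Some y \<Longrightarrow> rf_eval f (Rec ca cs) \<langle>x, k\<rangle> y" for f x k y
  proof (induction k arbitrary: y)
    case 0 then show ?case using a by (auto intro: rf_eval_Rec0)
  next
    case (Suc k)
    then obtain u where u: "bind_iter (S f x) k (A f x) = Some u" "S f x k u = Some y"
      by (cases "bind_iter (S f x) k (A f x)") auto
    show ?case
      by (rule rf_eval_RecS[OF Suc.IH[OF u(1)]]) (use s[of f "\<langle>x, \<langle>k, u\<rangle>\<rangle>"] u(2) in simp)
  qed
  have "rf_eval f (Comp (Rec ca cs) (Pair (Pair Fst Snd) cn)) x y"
    if "bind_iter (S f x) (N x) (A f x) = Some y" for f x y
    using rec[OF that] by (blast intro: rf_eval_Comp rf_eval_pair_input n)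
  then show ?thesis unfolding oracle_rec_def by blast
qed

definition minimize :: "(nat \<Rightarrow> nat option) \<Rightarrow> nat \<Rightarrow> nat option" where
  "minimize P x = (if \<exists>n. P \<langle>x, n\<rangle> = Some 0 \<and> (\<forall>k<n. \<exists>y. y \<noteq> 0 \<and> P \<langle>x, k\<rangle> = Some y)
     then Some (LEAST n. P \<langle>x, n\<rangle> = Some 0) else None)"

lemma minimize_eqI:
  assumes "P \<langle>x, n\<rangle> = Some 0" "\<forall>k<n. \<exists>y. y \<noteq> 0 \<and> P \<langle>x, k\<rangle> = Some y"
  shows "minimize P x = Some n"
proof -
  have "(LEAST n. P \<langle>x, n\<rangle> = Some 0) = n"
  proof (rule Least_equality)
    fix m assume "P \<langle>x, m\<rangle> = Some 0"
    then show "n \<le> m" using assms(2) by (metis leI option.inject)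
  qed fact
  with assms show ?thesis unfolding minimize_def by auto
qed

lemma oracle_rec_minimize: "oracle_rec P \<Longrightarrow> oracle_rec (\<lambda>f. minimize (P f))"
proof -
  assume "oracle_rec P"
  then obtain cp where p: "\<And>f x y. P f x = Some y \<Longrightarrow> rf_eval f cp x y"
    unfolding oracle_rec_def by metis
  have "rf_eval f (Mu cp) x y" if "minimize (P f) x = Some y" for f x y
  proof -
    from that obtain n where n: "P f \<langle>x, n\<rangle> = Some 0" "\<forall>k<n. \<exists>y. y \<noteq> 0 \<and> P f \<langle>x, k\<rangle> = Some y"
      unfolding minimize_def by (auto split: if_splits)
    with that have "y = n" using minimize_eqI by (metis option.inject)
    with n p show ?thesis by (blast intro: rf_eval_Mu)
  qed
  then show ?thesis unfolding oracle_rec_def by blast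
qed

lemma oracle_rec_search:
  assumes "rec_pred (\<lambda>z. P (nfst z) (nsnd z))" "total_rec (\<lambda>z. E (nfst z) (nsnd z))"
  shows "oracle_rec (\<lambda>f x. if \<exists>n. P x n then Some (E x (LEAST n. P x n)) else None)"
proof -
  obtain X where X: "total_rec X" "\<And>x n. P x n \<longleftrightarrow> X \<langle>x, n\<rangle> = 0"
    using assms(1) unfolding rec_pred_def by (metis nfst_npair nsnd_npair)
  have "minimize (\<lambda>z. Some (X z)) x = (if \<exists>n. P x n then Some (LEAST n. P x n) else None)" for x
  proof (cases "\<exists>n. P x n")
    case True
    then have "X \<langle>x, LEAST n. P x n\<rangle> = 0" unfolding X(2)[symmetric] by (rule LeastI_ex)
    moreover have "\<forall>k < (LEAST n. P x n). \<exists>y. y \<noteq> 0 \<and> Some (X \<langle>x, k\<rangle>) = Some y"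
      using X(2) by (auto dest: not_less_Least)
    ultimately show ?thesis using True by (simp add: minimize_eqI)
  qed (simp add: minimize_def X(2))
  moreover have "oracle_rec (\<lambda>f x. Option.bind (minimize (\<lambda>z. Some (X z)) x) (\<lambda>n. Some (E x n)))"
    using oracle_rec_minimize[of "\<lambda>f z. Some (X z)"] X(1) assms(2)
    by (intro oracle_rec_bind) (simp_all add: oracle_rec_total)
  moreover have "Option.bind (if b then Some m else None) (\<lambda>n. Some (E x n)) =
    (if b then Some (E x m) else None)" for b m x
    by simp
  ultimately show ?thesis by simp
qed

lemmas oracle_rec_intros = oracle_rec_total oracle_rec_oracle oracle_rec_bind oracle_rec_bind_iter
  oracle_rec_minimize

section \<open>An interpreter with a finite table of oracle answers\<close>

text \<open>Finite lists are coded with 0 as the empty list; they serve both as the control stack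
  and as the table of oracle answers t. A state is \<open>Eval c x K\<close> (run program c on x, then
  continue with stack K), \<open>Ret y K\<close> (pass y to the top frame of K), \<open>Lookup x r K\<close> (search the
  rest r of the table for the oracle value at x) or \<open>Query v\<close> (stuck: the table has no entry
  for v). A frame records what remains to be done with a returned value, e.g. \<open>FRec h x k N\<close>
  is a primitive recursion that has completed k of its N rounds.\<close>

definition "ncons x xs = Suc \<langle>x, xs\<rangle>"

definition "FComp g = \<langle>0, g\<rangle>"
definition "FPair1 h x = \<langle>1, \<langle>h, x\<rangle>\<rangle>"
definition "FPair2 y = \<langle>2, y\<rangle>"
definition "FRec h x k N = \<langle>3, \<langle>h, \<langle>x, \<langle>k, N\<rangle>\<rangle>\<rangle>\<rangle>"
definition "FMu g x k = \<langle>4, \<langle>g, \<langle>x, k\<rangle>\<rangle>\<rangle>"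

definition "Eval c x K = \<langle>0, \<langle>c, \<langle>x, K\<rangle>\<rangle>\<rangle>"
definition "Ret y K = \<langle>1, \<langle>y, K\<rangle>\<rangle>"
definition "Lookup x r K = \<langle>2, \<langle>x, \<langle>r, K\<rangle>\<rangle>\<rangle>"
definition "Query v = \<langle>3, v\<rangle>"

lemmas machine_defs = ncons_def FComp_def FPair1_def FPair2_def FRec_def FMu_def
  Eval_def Ret_def Lookup_def Query_def

definition interp_step :: "nat \<Rightarrow> nat \<Rightarrow> nat" where
"interp_step t s = (let tg = nfst s; d = nsnd s in
  if tg = 0 then (let c = nfst d; x = nfst (nsnd d); K = nsnd (nsnd d); m = c mod 9; a = c div 9 in
     if m = 0 then Ret 0 K else if m = 1 then Ret (Suc x) K else if m = 2 then Ret (nfst x) K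
     else if m = 3 then Ret (nsnd x) K
     else if m = 4 then Lookup x t K
     else if m = 5 then Eval (nsnd a) x (ncons (FComp (nfst a)) K)
     else if m = 6 then Eval (nfst a) x (ncons (FPair1 (nsnd a) x) K)
     else if m = 7 then Eval (nfst a) (nfst x) (ncons (FRec (nsnd a) (nfst x) 0 (nsnd x)) K)
     else Eval a \<langle>x, 0\<rangle> (ncons (FMu a x 0) K))
  else if tg = 1 then (let y = nfst d; K = nsnd d in
     if K = 0 then s else (let fr = nfst (K - 1); K' = nsnd (K - 1); ft = nfst fr; fa = nsnd fr in
       if ft = 0 then Eval fa y K'
       else if ft = 1 then Eval (nfst fa) (nsnd fa) (ncons (FPair2 y) K')
       else if ft = 2 then Ret \<langle>fa, y\<rangle> K'
       else if ft = 3 then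
         (let h = nfst fa; x = nfst (nsnd fa); k = nfst (nsnd (nsnd fa)); N = nsnd (nsnd (nsnd fa)) in
            if k = N then Ret y K' else Eval h \<langle>x, \<langle>k, y\<rangle>\<rangle> (ncons (FRec h x (Suc k) N) K'))
       else (let g = nfst fa; x = nfst (nsnd fa); k = nsnd (nsnd fa) in
            if y = 0 then Ret k K' else Eval g \<langle>x, Suc k\<rangle> (ncons (FMu g x (Suc k)) K'))))
  else if tg = 2 then (let x = nfst d; r = nfst (nsnd d); K = nsnd (nsnd d) in
     if r = 0 then Query x else if nfst (nfst (r - 1)) = x then Ret (nsnd (nfst (r - 1))) K
     else Lookup x (nsnd (r - 1)) K)
  else s)"

lemma total_rec_interp_step: "total_rec (\<lambda>z. interp_step (nfst z) (nsnd z))"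
  unfolding interp_step_def Let_def machine_defs by (intro total_rec_intros)

lemma ncons_neq_0 [simp]: "ncons x xs \<noteq> 0"
  and ncons_minus_1 [simp]: "ncons x xs - Suc 0 = \<langle>x, xs\<rangle>"
  by (simp_all add: ncons_def)

lemma interp_step_Eval:
  "interp_step t (Eval c x K) =
    (if c mod 9 = 0 then Ret 0 K
     else if c mod 9 = 1 then Ret (Suc x) K
     else if c mod 9 = 2 then Ret (nfst x) K
     else if c mod 9 = 3 then Ret (nsnd x) K
     else if c mod 9 = 4 then Lookup x t K
     else if c mod 9 = 5 then Eval (nsnd (c div 9)) x (ncons (FComp (nfst (c div 9))) K)
     else if c mod 9 = 6 then Eval (nfst (c div 9)) x (ncons (FPair1 (nsnd (c div 9)) x) K)
     else if c mod 9 = 7 then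
       Eval (nfst (c div 9)) (nfst x) (ncons (FRec (nsnd (c div 9)) (nfst x) 0 (nsnd x)) K)
     else Eval (c div 9) \<langle>x, 0\<rangle> (ncons (FMu (c div 9) x 0) K))"
  by (simp add: interp_step_def Eval_def Let_def)

lemma interp_step_Ret [simp]:
  "interp_step t (Ret y 0) = Ret y 0"
  "interp_step t (Ret y (ncons (FComp g) K)) = Eval g y K"
  "interp_step t (Ret y (ncons (FPair1 h x) K)) = Eval h x (ncons (FPair2 y) K)"
  "interp_step t (Ret z (ncons (FPair2 y) K)) = Ret \<langle>y, z\<rangle> K"
  "interp_step t (Ret y (ncons (FRec h x k N) K)) =
     (if k = N then Ret y K else Eval h \<langle>x, \<langle>k, y\<rangle>\<rangle> (ncons (FRec h x (Suc k) N) K))"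
  "interp_step t (Ret y (ncons (FMu g x k) K)) =
     (if y = 0 then Ret k K else Eval g \<langle>x, Suc k\<rangle> (ncons (FMu g x (Suc k)) K))"
  by (simp_all add: interp_step_def Ret_def FComp_def FPair1_def FPair2_def FRec_def FMu_def Let_def)

lemma interp_step_Lookup [simp]:
  "interp_step t (Lookup x 0 K) = Query x"
  "interp_step t (Lookup x (ncons \<langle>v, a\<rangle> r) K) = (if v = x then Ret a K else Lookup x r K)"
  by (simp_all add: interp_step_def Lookup_def Let_def)

lemma interp_step_Query [simp]: "interp_step t (Query v) = Query v"
  by (simp add: interp_step_def Query_def)

fun table_code :: "(nat \<times> nat) list \<Rightarrow> nat" where
  "table_code [] = 0"
| "table_code ((v, a) # r) = ncons \<langle>v, a\<rangle> (table_code r)"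

definition reaches :: "nat \<Rightarrow> nat \<Rightarrow> nat \<Rightarrow> bool" where
  "reaches t s s' \<longleftrightarrow> (\<exists>n. (interp_step t ^^ n) s = s')"

lemma reaches_refl [simp]: "reaches t s s"
  unfolding reaches_def by (metis funpow_0)

lemma reaches_trans: "reaches t s1 s2 \<Longrightarrow> reaches t s2 s3 \<Longrightarrow> reaches t s1 s3"
  unfolding reaches_def by (metis funpow_add comp_apply)

lemma reaches_step: "reaches t (interp_step t s) s' \<Longrightarrow> reaches t s s'"
  unfolding reaches_def by (metis funpow_Suc_right comp_apply)

lemma reaches_Lookup:
  "reaches t (Lookup x (table_code r) K) (case map_of r x of Some a \<Rightarrow> Ret a K | None \<Rightarrow> Query x)"
proof (induction r)
  case (Cons e r) then show ?case by (cases e) (auto intro: reaches_step)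
qed (auto intro: reaches_step)

definition runs_to :: "(nat \<times> nat) list \<Rightarrow> nat set \<Rightarrow> nat \<Rightarrow> nat \<Rightarrow> bool" where
  "runs_to tb Q s s' \<longleftrightarrow>
     reaches (table_code tb) s s' \<or> (\<exists>v\<in>Q. map_of tb v = None \<and> reaches (table_code tb) s (Query v))"

lemma runs_to_refl [simp]: "runs_to tb Q s s"
  unfolding runs_to_def by simp

lemma runs_to_trans [trans]: "runs_to tb Q s1 s2 \<Longrightarrow> runs_to tb Q s2 s3 \<Longrightarrow> runs_to tb Q s1 s3"
  unfolding runs_to_def by (meson reaches_trans)

lemma runs_to_mono: "runs_to tb Q s s' \<Longrightarrow> Q \<subseteq> Q' \<Longrightarrow> runs_to tb Q' s s'"
  unfolding runs_to_def by blast

lemma runs_to_UnI1: "runs_to tb Q1 s s' \<Longrightarrow> runs_to tb (Q1 \<union> Q2) s s'"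
  and runs_to_UnI2: "runs_to tb Q2 s s' \<Longrightarrow> runs_to tb (Q1 \<union> Q2) s s'"
  by (erule runs_to_mono, blast)+

lemma runs_to_stepI: "interp_step (table_code tb) s = s' \<Longrightarrow> runs_to tb Q s s'"
  unfolding runs_to_def by (metis reaches_refl reaches_step)

text \<open>The use principle: a computation g x = y relative to f consults f only on a finite set Q,
  so the interpreter replays it from any table of correct answers, unless it gets stuck on an
  unanswered query from Q.\<close>

definition simulates :: "(nat \<Rightarrow> nat option) \<Rightarrow> rf \<Rightarrow> nat \<Rightarrow> nat \<Rightarrow> bool" where
  "simulates f g x y \<longleftrightarrow> (\<exists>Q. finite Q \<and> Q \<subseteq> dom f \<and>
     (\<forall>tb c K. map_of tb \<subseteq>\<^sub>m f \<longrightarrow> rf_decode c = g \<longrightarrow> runs_to tb Q (Eval c x K) (Ret y K)))"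

text \<open>The machine runs \<open>Rec g h\<close> upwards from the base case, whereas \<open>rf_eval\<close> recurses on n;
  this is the invariant linking the two: n rounds of a loop with bound N.\<close>

definition simulates_rec :: "(nat \<Rightarrow> nat option) \<Rightarrow> rf \<Rightarrow> rf \<Rightarrow> nat \<Rightarrow> nat \<Rightarrow> nat \<Rightarrow> bool" where
  "simulates_rec f g h x n y \<longleftrightarrow> (\<exists>Q. finite Q \<and> Q \<subseteq> dom f \<and>
     (\<forall>tb cg ch N K. map_of tb \<subseteq>\<^sub>m f \<longrightarrow> rf_decode cg = g \<longrightarrow> rf_decode ch = h \<longrightarrow> n \<le> N \<longrightarrow>
        runs_to tb Q (Eval cg x (ncons (FRec ch x 0 N) K)) (Ret y (ncons (FRec ch x n N) K))))"

lemma simulates_basic: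
  "simulates f Zer x 0" "simulates f Succ x (Suc x)"
  "simulates f Fst x (nfst x)" "simulates f Snd x (nsnd x)"
  unfolding simulates_def
  by (auto intro!: exI[of _ "{}"] runs_to_stepI simp: interp_step_Eval
      dest!: rf_decode_ZerD rf_decode_SuccD rf_decode_FstD rf_decode_SndD)

lemma simulates_Orc:
  assumes "f x = Some y"
  shows "simulates f Orc x y"
  unfolding simulates_def
proof (intro exI[of _ "{x}"] conjI allI impI)
  fix tb c K assume tb: "map_of tb \<subseteq>\<^sub>m f" and "rf_decode c = Orc"
  then have "runs_to tb {x} (Eval c x K) (Lookup x (table_code tb) K)"
    by (intro runs_to_stepI) (simp add: interp_step_Eval rf_decode_OrcD)
  also have "runs_to tb {x} \<dots> (Ret y K)"
    using reaches_Lookup[of "table_code tb" x tb K] tb assms unfolding runs_to_def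
    by (cases "map_of tb x") (auto simp: map_le_def dom_def)
  finally show "runs_to tb {x} (Eval c x K) (Ret y K)" .
qed (use assms in auto)

lemma simulates_Comp:
  assumes "simulates f h x y" "simulates f g y z"
  shows "simulates f (Comp g h) x z"
proof -
  obtain Q1 Q2 where Q: "finite Q1" "Q1 \<subseteq> dom f" "finite Q2" "Q2 \<subseteq> dom f"
    and h: "\<And>tb c K. map_of tb \<subseteq>\<^sub>m f \<Longrightarrow> rf_decode c = h \<Longrightarrow> runs_to tb Q1 (Eval c x K) (Ret y K)"
    and g: "\<And>tb c K. map_of tb \<subseteq>\<^sub>m f \<Longrightarrow> rf_decode c = g \<Longrightarrow> runs_to tb Q2 (Eval c y K) (Ret z K)"
    using assms unfolding simulates_def by metis
  have "runs_to tb (Q1 \<union> Q2) (Eval c x K) (Ret z K)"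
    if tb: "map_of tb \<subseteq>\<^sub>m f" and "rf_decode c = Comp g h" for tb c K
  proof -
    define a where "a = c div 9"
    note c = rf_decode_CompD[OF that(2), folded a_def]
    have "runs_to tb (Q1 \<union> Q2) (Eval c x K) (Eval (nsnd a) x (ncons (FComp (nfst a)) K))"
      by (rule runs_to_stepI) (simp add: interp_step_Eval c a_def)
    also have "runs_to tb (Q1 \<union> Q2) \<dots> (Ret y (ncons (FComp (nfst a)) K))"
      by (intro runs_to_UnI1 h[OF tb]) (simp add: c)
    also have "runs_to tb (Q1 \<union> Q2) \<dots> (Eval (nfst a) y K)"
      by (rule runs_to_stepI) simp
    also have "runs_to tb (Q1 \<union> Q2) \<dots> (Ret z K)"
      by (intro runs_to_UnI2 g[OF tb]) (simp add: c)
    finally show ?thesis .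
  qed
  with Q show ?thesis unfolding simulates_def by (intro exI[of _ "Q1 \<union> Q2"]) auto
qed

lemma simulates_Pair:
  assumes "simulates f g x y" "simulates f h x z"
  shows "simulates f (Pair g h) x \<langle>y, z\<rangle>"
proof -
  obtain Q1 Q2 where Q: "finite Q1" "Q1 \<subseteq> dom f" "finite Q2" "Q2 \<subseteq> dom f"
    and g: "\<And>tb c K. map_of tb \<subseteq>\<^sub>m f \<Longrightarrow> rf_decode c = g \<Longrightarrow> runs_to tb Q1 (Eval c x K) (Ret y K)"
    and h: "\<And>tb c K. map_of tb \<subseteq>\<^sub>m f \<Longrightarrow> rf_decode c = h \<Longrightarrow> runs_to tb Q2 (Eval c x K) (Ret z K)"
    using assms unfolding simulates_def by metis
  have "runs_to tb (Q1 \<union> Q2) (Eval c x K) (Ret \<langle>y, z\<rangle> K)"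
    if tb: "map_of tb \<subseteq>\<^sub>m f" and "rf_decode c = Pair g h" for tb c K
  proof -
    define a where "a = c div 9"
    note c = rf_decode_PairD[OF that(2), folded a_def]
    have "runs_to tb (Q1 \<union> Q2) (Eval c x K) (Eval (nfst a) x (ncons (FPair1 (nsnd a) x) K))"
      by (rule runs_to_stepI) (simp add: interp_step_Eval c a_def)
    also have "runs_to tb (Q1 \<union> Q2) \<dots> (Ret y (ncons (FPair1 (nsnd a) x) K))"
      by (intro runs_to_UnI1 g[OF tb]) (simp add: c)
    also have "runs_to tb (Q1 \<union> Q2) \<dots> (Eval (nsnd a) x (ncons (FPair2 y) K))"
      by (rule runs_to_stepI) simp
    also have "runs_to tb (Q1 \<union> Q2) \<dots> (Ret z (ncons (FPair2 y) K))"
      by (intro runs_to_UnI2 h[OF tb]) (simp add: c)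
    also have "runs_to tb (Q1 \<union> Q2) \<dots> (Ret \<langle>y, z\<rangle> K)"
      by (rule runs_to_stepI) simp
    finally show ?thesis .
  qed
  with Q show ?thesis unfolding simulates_def by (intro exI[of _ "Q1 \<union> Q2"]) auto
qed

lemma simulates_rec_0:
  assumes "simulates f g x y"
  shows "simulates_rec f g h x 0 y"
proof -
  obtain Q where Q: "finite Q" "Q \<subseteq> dom f"
    and g: "\<And>tb c K. map_of tb \<subseteq>\<^sub>m f \<Longrightarrow> rf_decode c = g \<Longrightarrow> runs_to tb Q (Eval c x K) (Ret y K)"
    using assms unfolding simulates_def by metis
  show ?thesis
    unfolding simulates_rec_def by (intro exI[of _ Q] conjI allI impI g) (use Q in simp_all)
qed

lemma simulates_rec_Suc:
  assumes "simulates_rec f g h x n y" "simulates f h \<langle>x, \<langle>n, y\<rangle>\<rangle> z"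
  shows "simulates_rec f g h x (Suc n) z"
proof -
  obtain Q1 Q2 where Q: "finite Q1" "Q1 \<subseteq> dom f" "finite Q2" "Q2 \<subseteq> dom f"
    and rec: "\<And>tb cg ch N K. map_of tb \<subseteq>\<^sub>m f \<Longrightarrow> rf_decode cg = g \<Longrightarrow> rf_decode ch = h \<Longrightarrow> n \<le> N \<Longrightarrow>
      runs_to tb Q1 (Eval cg x (ncons (FRec ch x 0 N) K)) (Ret y (ncons (FRec ch x n N) K))"
    and h: "\<And>tb c K. map_of tb \<subseteq>\<^sub>m f \<Longrightarrow> rf_decode c = h \<Longrightarrow>
      runs_to tb Q2 (Eval c \<langle>x, \<langle>n, y\<rangle>\<rangle> K) (Ret z K)"
    using assms unfolding simulates_def simulates_rec_def by metis
  have "runs_to tb (Q1 \<union> Q2) (Eval cg x (ncons (FRec ch x 0 N) K)) (Ret z (ncons (FRec ch x (Suc n) N) K))"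
    if tb: "map_of tb \<subseteq>\<^sub>m f" and "rf_decode cg = g" "rf_decode ch = h" "Suc n \<le> N" for tb cg ch N K
  proof -
    have "runs_to tb (Q1 \<union> Q2) (Eval cg x (ncons (FRec ch x 0 N) K)) (Ret y (ncons (FRec ch x n N) K))"
      by (intro runs_to_UnI1 rec[OF tb]) (use that in simp_all)
    also have "runs_to tb (Q1 \<union> Q2) \<dots> (Eval ch \<langle>x, \<langle>n, y\<rangle>\<rangle> (ncons (FRec ch x (Suc n) N) K))"
      by (rule runs_to_stepI) (use that in simp)
    also have "runs_to tb (Q1 \<union> Q2) \<dots> (Ret z (ncons (FRec ch x (Suc n) N) K))"
      by (intro runs_to_UnI2 h[OF tb]) (use that in simp)
    finally show ?thesis .
  qed
  with Q show ?thesis unfolding simulates_rec_def by (intro exI[of _ "Q1 \<union> Q2"]) auto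
qed

lemma simulates_Rec:
  assumes "simulates_rec f g h x n y"
  shows "simulates f (Rec g h) \<langle>x, n\<rangle> y"
proof -
  obtain Q where Q: "finite Q" "Q \<subseteq> dom f"
    and rec: "\<And>tb cg ch N K. map_of tb \<subseteq>\<^sub>m f \<Longrightarrow> rf_decode cg = g \<Longrightarrow> rf_decode ch = h \<Longrightarrow> n \<le> N \<Longrightarrow>
      runs_to tb Q (Eval cg x (ncons (FRec ch x 0 N) K)) (Ret y (ncons (FRec ch x n N) K))"
    using assms unfolding simulates_rec_def by metis
  have "runs_to tb Q (Eval c \<langle>x, n\<rangle> K) (Ret y K)"
    if tb: "map_of tb \<subseteq>\<^sub>m f" and "rf_decode c = Rec g h" for tb c K
  proof -
    define a where "a = c div 9"
    note c = rf_decode_RecD[OF that(2), folded a_def]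
    have "runs_to tb Q (Eval c \<langle>x, n\<rangle> K) (Eval (nfst a) x (ncons (FRec (nsnd a) x 0 n) K))"
      by (rule runs_to_stepI) (simp add: interp_step_Eval c a_def)
    also have "runs_to tb Q \<dots> (Ret y (ncons (FRec (nsnd a) x n n) K))"
      using rec[OF tb] c by blast
    also have "runs_to tb Q \<dots> (Ret y K)"
      by (rule runs_to_stepI) simp
    finally show ?thesis .
  qed
  with Q show ?thesis unfolding simulates_def by blast
qed

lemma simulates_Mu_search:
  assumes "\<forall>k<j. \<exists>y. y \<noteq> 0 \<and> simulates f g \<langle>x, k\<rangle> y"
  shows "\<exists>Q. finite Q \<and> Q \<subseteq> dom f \<and> (\<forall>tb c K. map_of tb \<subseteq>\<^sub>m f \<longrightarrow> rf_decode c = Mu g \<longrightarrow>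
    runs_to tb Q (Eval c x K) (Eval (c div 9) \<langle>x, j\<rangle> (ncons (FMu (c div 9) x j) K)))"
  using assms
proof (induction j)
  case 0
  show ?case
    by (auto intro!: exI[of _ "{}"] runs_to_stepI simp: interp_step_Eval dest!: rf_decode_MuD)
next
  case (Suc j)
  then obtain Q1 where Q1: "finite Q1" "Q1 \<subseteq> dom f"
    and search: "\<And>tb c K. map_of tb \<subseteq>\<^sub>m f \<Longrightarrow> rf_decode c = Mu g \<Longrightarrow>
      runs_to tb Q1 (Eval c x K) (Eval (c div 9) \<langle>x, j\<rangle> (ncons (FMu (c div 9) x j) K))"
    by auto
  from Suc.prems obtain y Q2 where "y \<noteq> 0" and Q2: "finite Q2" "Q2 \<subseteq> dom f"
    and g: "\<And>tb c K. map_of tb \<subseteq>\<^sub>m f \<Longrightarrow> rf_decode c = g \<Longrightarrow> runs_to tb Q2 (Eval c \<langle>x, j\<rangle> K) (Ret y K)"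
    unfolding simulates_def by (meson lessI)
  have "runs_to tb (Q1 \<union> Q2) (Eval c x K) (Eval (c div 9) \<langle>x, Suc j\<rangle> (ncons (FMu (c div 9) x (Suc j)) K))"
    if tb: "map_of tb \<subseteq>\<^sub>m f" and c: "rf_decode c = Mu g" for tb c K
  proof -
    have "runs_to tb (Q1 \<union> Q2) (Eval c x K) (Eval (c div 9) \<langle>x, j\<rangle> (ncons (FMu (c div 9) x j) K))"
      by (rule runs_to_UnI1[OF search[OF tb c]])
    also have "runs_to tb (Q1 \<union> Q2) \<dots> (Ret y (ncons (FMu (c div 9) x j) K))"
      by (intro runs_to_UnI2 g[OF tb]) (use rf_decode_MuD[OF c] in simp)
    also have "runs_to tb (Q1 \<union> Q2) \<dots> (Eval (c div 9) \<langle>x, Suc j\<rangle> (ncons (FMu (c div 9) x (Suc j)) K))"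
      by (rule runs_to_stepI) (simp add: \<open>y \<noteq> 0\<close>)
    finally show ?thesis .
  qed
  with Q1 Q2 show ?case by (intro exI[of _ "Q1 \<union> Q2"]) auto
qed

lemma simulates_Mu:
  assumes "simulates f g \<langle>x, n\<rangle> 0" "\<forall>k<n. \<exists>y. y \<noteq> 0 \<and> simulates f g \<langle>x, k\<rangle> y"
  shows "simulates f (Mu g) x n"
proof -
  obtain Q1 where Q1: "finite Q1" "Q1 \<subseteq> dom f"
    and search: "\<And>tb c K. map_of tb \<subseteq>\<^sub>m f \<Longrightarrow> rf_decode c = Mu g \<Longrightarrow>
      runs_to tb Q1 (Eval c x K) (Eval (c div 9) \<langle>x, n\<rangle> (ncons (FMu (c div 9) x n) K))"
    using simulates_Mu_search[OF assms(2)] by metis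
  obtain Q2 where Q2: "finite Q2" "Q2 \<subseteq> dom f"
    and g: "\<And>tb c K. map_of tb \<subseteq>\<^sub>m f \<Longrightarrow> rf_decode c = g \<Longrightarrow> runs_to tb Q2 (Eval c \<langle>x, n\<rangle> K) (Ret 0 K)"
    using assms(1) unfolding simulates_def by metis
  have "runs_to tb (Q1 \<union> Q2) (Eval c x K) (Ret n K)"
    if tb: "map_of tb \<subseteq>\<^sub>m f" and c: "rf_decode c = Mu g" for tb c K
  proof -
    have "runs_to tb (Q1 \<union> Q2) (Eval c x K) (Eval (c div 9) \<langle>x, n\<rangle> (ncons (FMu (c div 9) x n) K))"
      by (rule runs_to_UnI1[OF search[OF tb c]])
    also have "runs_to tb (Q1 \<union> Q2) \<dots> (Ret 0 (ncons (FMu (c div 9) x n) K))"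
      by (intro runs_to_UnI2 g[OF tb]) (use rf_decode_MuD[OF c] in simp)
    also have "runs_to tb (Q1 \<union> Q2) \<dots> (Ret n K)"
      by (rule runs_to_stepI) simp
    finally show ?thesis .
  qed
  with Q1 Q2 show ?thesis unfolding simulates_def by (intro exI[of _ "Q1 \<union> Q2"]) auto
qed

lemma rf_eval_simulates_and_simulates_rec:
  "rf_eval f g x y \<Longrightarrow> simulates f g x y \<and>
     (\<forall>g' h' x' n. g = Rec g' h' \<longrightarrow> x = \<langle>x', n\<rangle> \<longrightarrow> simulates_rec f g' h' x' n y)"
proof (induction rule: rf_eval.induct)
  case (8 g x y h) then show ?case by (auto intro: simulates_Rec simulates_rec_0)
next
  case (9 g h x n y z) then show ?case by (auto intro: simulates_Rec simulates_rec_Suc)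
next
  case (10 g x n)
  then have "\<forall>k<n. \<exists>y. y \<noteq> 0 \<and> simulates f g \<langle>x, k\<rangle> y" by blast
  with "10.IH"(1) show ?case by (auto intro: simulates_Mu)
qed (auto intro: simulates_basic simulates_Orc simulates_Comp simulates_Pair)

corollary rf_eval_simulates: "rf_eval f g x y \<Longrightarrow> simulates f g x y"
  using rf_eval_simulates_and_simulates_rec by blast

definition run :: "nat \<Rightarrow> nat \<Rightarrow> nat \<Rightarrow> nat \<Rightarrow> nat" where
  "run t c x n = (interp_step t ^^ n) (Eval c x 0)"

definition final :: "nat \<Rightarrow> bool" where
  "final s \<longleftrightarrow> (\<exists>y. s = Ret y 0) \<or> (\<exists>v. s = Query v)"

definition interp :: "nat \<Rightarrow> nat \<Rightarrow> nat \<Rightarrow> nat option" where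
  "interp t c x =
    (if \<exists>n. final (run t c x n) then Some (run t c x (LEAST n. final (run t c x n))) else None)"

lemma final_iff: "final s \<longleftrightarrow> (nfst s = 1 \<and> nsnd (nsnd s) = 0) \<or> nfst s = 3"
  unfolding final_def Ret_def Query_def by (metis npair_nfst_nsnd nfst_npair nsnd_npair)

lemma final_Ret [simp]: "final (Ret y 0)" and final_Query [simp]: "final (Query v)"
  unfolding final_def by blast+

lemma interp_step_final: "final s \<Longrightarrow> interp_step t s = s"
  unfolding final_def by auto

lemma total_rec_run:
  assumes "total_rec T" "total_rec C" "total_rec X" "total_rec N"
  shows "total_rec (\<lambda>z. run (T z) (C z) (X z) (N z))"
  unfolding run_def Eval_def
proof (rule total_rec_funpow)
  show "total_rec (\<lambda>z. interp_step (T (nfst z)) (nsnd z))"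
    by (rule total_rec_comp2[OF total_rec_interp_step total_rec_comp[OF assms(1)]])
      (intro total_rec_intros)+
qed (intro total_rec_intros assms)+

lemma oracle_rec_interp:
  assumes "total_rec T" "total_rec C" "total_rec X"
  shows "oracle_rec (\<lambda>f z. interp (T z) (C z) (X z))"
proof -
  have "oracle_rec (\<lambda>f z. interp (nfst z) (nfst (nsnd z)) (nsnd (nsnd z)))"
    unfolding interp_def
    by (intro oracle_rec_search, unfold final_iff) (intro total_rec_intros total_rec_run)+
  from oracle_rec_comp[OF this, of "\<lambda>z. \<langle>T z, \<langle>C z, X z\<rangle>\<rangle>"] show ?thesis
    by (simp add: total_rec_npair assms)
qed

lemma funpow_interp_step_final: "final s \<Longrightarrow> (interp_step t ^^ k) s = s"
  by (induction k) (simp_all add: interp_step_final)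

lemma interp_eqI:
  assumes "reaches t (Eval c x 0) s" "final s"
  shows "interp t c x = Some s"
proof -
  obtain n where n: "run t c x n = s" using assms(1) unfolding reaches_def run_def by blast
  define m where "m = (LEAST n. final (run t c x n))"
  have m: "final (run t c x m)"
    unfolding m_def by (rule LeastI[of _ n]) (simp add: n assms(2))
  have "m \<le> n"
    unfolding m_def by (rule Least_le) (simp add: n assms(2))
  then obtain k where "n = k + m" by (metis le_add_diff_inverse2)
  then have "run t c x n = (interp_step t ^^ k) (run t c x m)"
    by (simp add: run_def funpow_add)
  with n m have "run t c x m = s" by (simp add: funpow_interp_step_final)
  with n assms(2) show ?thesis unfolding interp_def m_def by auto
qed

section \<open>A universal function for \<open>K1\<close>\<close>

definition univ :: "nat \<Rightarrow> nat \<Rightarrow> nat option" where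
  "univ c x = Option.bind (interp 0 c x) (\<lambda>s. Some (nfst (nsnd s)))"

definition univ2 :: "nat \<Rightarrow> nat \<Rightarrow> nat \<Rightarrow> nat option" where
  "univ2 c a b = Option.bind (univ c a) (\<lambda>d. univ d b)"

lemma oracle_rec_univ:
  assumes "total_rec C" "total_rec X"
  shows "oracle_rec (\<lambda>f z. univ (C z) (X z))"
proof -
  have "oracle_rec (\<lambda>f z. interp 0 (C z) (X z))"
    by (rule oracle_rec_interp[OF total_rec_const assms])
  moreover have "oracle_rec (\<lambda>f z. Some (nfst (nsnd (nsnd z))))"
    by (intro oracle_rec_total total_rec_nfst total_rec_nsnd total_rec_id)
  ultimately show ?thesis
    unfolding univ_def by (rule oracle_rec_bind)
qed

lemma oracle_rec_univ2:
  assumes "total_rec C" "total_rec A" "total_rec B"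
  shows "oracle_rec (\<lambda>f z. univ2 (C z) (A z) (B z))"
proof -
  have "oracle_rec (\<lambda>f z. univ (C z) (A z))"
    by (rule oracle_rec_univ[OF assms(1,2)])
  moreover have "oracle_rec (\<lambda>f w. univ (nsnd w) (B (nfst w)))"
    by (rule oracle_rec_univ[OF total_rec_nsnd[OF total_rec_id]
          total_rec_comp[OF assms(3) total_rec_nfst[OF total_rec_id]]])
  ultimately show ?thesis
    unfolding univ2_def by (rule oracle_rec_bind)
qed

lemma univ_K1:
  assumes "K1 c x = Some y"
  shows "univ c x = Some y"
proof -
  have "rf_eval (\<lambda>_. None) (rf_decode c) x y"
    using assms unfolding K1_def K1f_def by (rule phi_SomeD)
  from rf_eval_simulates[OF this] obtain Q where Q: "Q \<subseteq> dom (\<lambda>_::nat. None :: nat option)"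
    and "\<forall>tb c' K. map_of tb \<subseteq>\<^sub>m (\<lambda>_. None) \<longrightarrow> rf_decode c' = rf_decode c \<longrightarrow>
      runs_to tb Q (Eval c' x K) (Ret y K)"
    unfolding simulates_def by blast
  then have "runs_to [] Q (Eval c x 0) (Ret y 0)" by simp
  with Q have "reaches 0 (Eval c x 0) (Ret y 0)" unfolding runs_to_def by simp
  then have "interp 0 c x = Some (Ret y 0)" by (rule interp_eqI) simp
  then show ?thesis unfolding univ_def by (simp add: Ret_def)
qed

lemma univ2_K1: "app2 K1 c a b = Some y \<Longrightarrow> univ2 c a b = Some y"
  unfolding app2_def univ2_def by (cases "K1 c a") (auto simp: univ_K1)

section \<open>The s-m-n theorem\<close>

text \<open>\<open>const_code k\<close> codes \<open>Comp Succ (\<dots> (Comp Succ Zer))\<close>, and \<open>smn c a\<close> codes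
  \<open>Comp c (Pair (const_code a) (Pair Fst Snd))\<close>, which maps x to c applied to \<langle>a, x\<rangle>.\<close>

definition const_code :: "nat \<Rightarrow> nat" where
  "const_code k = ((\<lambda>c. 5 + 9 * \<langle>1, c\<rangle>) ^^ k) 0"

definition smn :: "nat \<Rightarrow> nat \<Rightarrow> nat" where
  "smn c a = 5 + 9 * \<langle>c, 6 + 9 * \<langle>const_code a, 6 + 9 * \<langle>2, 3\<rangle>\<rangle>\<rangle>"

lemma rf_decode_small_codes:
  "rf_decode 0 = Zer" "rf_decode (Suc 0) = Succ" "rf_decode 2 = Fst" "rf_decode 3 = Snd"
  "rf_decode (5 + 9 * m) = Comp (rf_decode (nfst m)) (rf_decode (nsnd m))"
  "rf_decode (6 + 9 * m) = Pair (rf_decode (nfst m)) (rf_decode (nsnd m))"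
  by (subst rf_decode.simps; simp)+

lemma rf_eval_const_code: "rf_eval f (rf_decode (const_code k)) x k"
  by (induction k) (auto simp: const_code_def rf_decode_small_codes intro: rf_eval_Zer rf_eval_Comp rf_eval_Succ)

lemma rf_eval_smn: "rf_eval f (rf_decode c) \<langle>a, x\<rangle> y \<Longrightarrow> rf_eval f (rf_decode (smn c a)) x y"
  unfolding smn_def rf_decode_small_codes nfst_npair nsnd_npair
  by (blast intro: rf_eval_Comp rf_eval_Pair rf_eval_const_code rf_eval_Pair_Fst_Snd)

lemma total_rec_smn: "total_rec (smn c)"
  unfolding smn_def[abs_def] const_code_def by (intro total_rec_intros total_rec_funpow[of "\<lambda>a. a"])

lemma K1f_smn: "K1f f c \<langle>a, x\<rangle> = Some y \<Longrightarrow> K1f f (smn c a) x = Some y"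
  unfolding K1f_def by (blast intro: phi_eqI rf_eval_smn phi_SomeD)

lemma oracle_rec_K1f: "oracle_rec G \<Longrightarrow> \<exists>c. \<forall>f x y. G f x = Some y \<longrightarrow> K1f f c x = Some y"
  unfolding oracle_rec_def K1f_def by (metis phi_eqI rf_decode_encode)

lemma total_rec_K1f: "total_rec G \<Longrightarrow> \<exists>c. \<forall>f x. K1f f c x = Some (G x)"
  unfolding total_rec_def K1f_def by (metis phi_eqI rf_decode_encode)

section \<open>Replaying an oracle computation from finitely many answers\<close>

definition answer_table :: "(nat \<Rightarrow> nat option) \<Rightarrow> nat list \<Rightarrow> (nat \<times> nat) list" where
  "answer_table f qs = map (\<lambda>v. (v, the (f v))) (rev qs)"

lemma map_of_answer_table: "map_of (answer_table f qs) = (Some \<circ> (\<lambda>v. the (f v))) |` set qs"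
  unfolding answer_table_def by (simp add: map_of_map_restrict)

lemma map_le_answer_table: "set qs \<subseteq> dom f \<Longrightarrow> map_of (answer_table f qs) \<subseteq>\<^sub>m f"
  unfolding map_of_answer_table map_le_def by (auto simp: restrict_map_def)

lemma table_code_answer_table_snoc:
  "table_code (answer_table f (qs @ [v])) = ncons \<langle>v, the (f v)\<rangle> (table_code (answer_table f qs))"
  by (simp add: answer_table_def)

text \<open>qs lists the queries on which the interpreter, run on c and x, successively gets stuck
  when it is given the oracle answers to the earlier ones.\<close>

definition query_sequence :: "(nat \<Rightarrow> nat option) \<Rightarrow> nat \<Rightarrow> nat \<Rightarrow> nat list \<Rightarrow> bool" where
  "query_sequence f c x qs \<longleftrightarrow>
     (\<forall>i<length qs. interp (table_code (answer_table f (take i qs))) c x = Some (Query (qs ! i)))"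

lemma query_sequence_snoc:
  assumes "query_sequence f c x qs" "interp (table_code (answer_table f qs)) c x = Some (Query v)"
  shows "query_sequence f c x (qs @ [v])"
  using assms unfolding query_sequence_def by (auto simp: nth_append less_Suc_eq)

lemma interp_answer_table_cases:
  assumes "\<And>tb. map_of tb \<subseteq>\<^sub>m f \<Longrightarrow> runs_to tb Q (Eval c x 0) (Ret y 0)" and "set qs \<subseteq> dom f"
  shows "interp (table_code (answer_table f qs)) c x = Some (Ret y 0) \<or>
    (\<exists>v \<in> Q - set qs. interp (table_code (answer_table f qs)) c x = Some (Query v))"
proof -
  from assms(1)[OF map_le_answer_table[OF assms(2)]]
  consider "reaches (table_code (answer_table f qs)) (Eval c x 0) (Ret y 0)"
    | v where "v \<in> Q" "map_of (answer_table f qs) v = None"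
      "reaches (table_code (answer_table f qs)) (Eval c x 0) (Query v)"
    unfolding runs_to_def by blast
  then show ?thesis
  proof cases
    case 1
    then show ?thesis by (intro disjI1 interp_eqI) simp_all
  next
    case (2 v)
    then have "v \<notin> set qs" by (simp add: map_of_answer_table restrict_map_def split: if_splits)
    moreover have "interp (table_code (answer_table f qs)) c x = Some (Query v)"
      using 2(3) by (rule interp_eqI) simp
    ultimately show ?thesis using 2(1) by blast
  qed
qed

text \<open>Termination of the replay: each new query lies in Q but outside the current table.\<close>

lemma query_sequence_extend:
  assumes Q: "finite Q" "Q \<subseteq> dom f"
    and sim: "\<And>tb. map_of tb \<subseteq>\<^sub>m f \<Longrightarrow> runs_to tb Q (Eval c x 0) (Ret y 0)"
    and "query_sequence f c x qs" "set qs \<subseteq> Q"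
  shows "\<exists>qs'. query_sequence f c x qs' \<and> set qs' \<subseteq> Q \<and>
    interp (table_code (answer_table f qs')) c x = Some (Ret y 0)"
  using assms(4,5)
proof (induction "card (Q - set qs)" arbitrary: qs rule: less_induct)
  case less
  from less.prems(2) Q(2) have "set qs \<subseteq> dom f" by blast
  from interp_answer_table_cases[OF sim this] show ?case
  proof
    assume "interp (table_code (answer_table f qs)) c x = Some (Ret y 0)"
    with less.prems show ?case by blast
  next
    assume "\<exists>v \<in> Q - set qs. interp (table_code (answer_table f qs)) c x = Some (Query v)"
    then obtain v where v: "v \<in> Q - set qs"
      "interp (table_code (answer_table f qs)) c x = Some (Query v)" by blast
    have "Q - set (qs @ [v]) = (Q - set qs) - {v}" by auto
    with v(1) Q(1) have "card (Q - set (qs @ [v])) < card (Q - set qs)"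
      by (metis card_Diff1_less finite_Diff)
    moreover have "query_sequence f c x (qs @ [v])"
      by (rule query_sequence_snoc[OF less.prems(1) v(2)])
    moreover have "set (qs @ [v]) \<subseteq> Q" using less.prems(2) v(1) by simp
    ultimately show ?case by (rule less.hyps)
  qed
qed

lemma query_sequence_exists:
  assumes "rf_eval f (rf_decode c) x y"
  shows "\<exists>qs. query_sequence f c x qs \<and> set qs \<subseteq> dom f \<and>
    interp (table_code (answer_table f qs)) c x = Some (Ret y 0)"
proof -
  obtain Q where Q: "finite Q" "Q \<subseteq> dom f"
    and sim: "\<And>tb. map_of tb \<subseteq>\<^sub>m f \<Longrightarrow> runs_to tb Q (Eval c x 0) (Ret y 0)"
    using rf_eval_simulates[OF assms] unfolding simulates_def by blast
  have "query_sequence f c x []" by (simp add: query_sequence_def)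
  from query_sequence_extend[OF Q sim this] obtain qs where "query_sequence f c x qs" "set qs \<subseteq> Q"
    "interp (table_code (answer_table f qs)) c x = Some (Ret y 0)"
    by auto
  with Q(2) show ?thesis by blast
qed

locale K1_coding =
  fixes T F p :: nat and enc :: "nat list \<Rightarrow> nat" and p0 p1 lh pr sn :: nat
  assumes app_T: "app2 K1 T x y = Some x"
    and app_F: "app2 K1 F x y = Some y"
    and app_p_defined: "app2 K1 p x y \<noteq> None"
    and app_p0_p1: "app2 K1 p x y = Some z \<Longrightarrow> K1 p0 z = Some x \<and> K1 p1 z = Some y"
    and app_lh: "K1 lh (enc us) = Some (length us)"
    and app_pr: "i < length us \<Longrightarrow> app2 K1 pr (enc us) i = Some (us ! i)"
    and app_sn: "app2 K1 sn (enc us) x = Some (enc (us @ [x]))"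

lemma K1_structure_K1_coding:
  assumes "K1_structure T F p enc"
  obtains p0 p1 lh pr sn where "K1_coding T F p enc p0 p1 lh pr sn"
proof -
  from assms obtain p0 p1 lh pr sn where
    "\<forall>x y. app2 K1 T x y = Some x" "\<forall>x y. app2 K1 F x y = Some y" "\<forall>x y. app2 K1 p x y \<noteq> None"
    "\<forall>x y z. app2 K1 p x y = Some z \<longrightarrow> K1 p0 z = Some x \<and> K1 p1 z = Some y"
    "\<forall>us. K1 lh (enc us) = Some (length us)"
    "\<forall>us i. i < length us \<longrightarrow> app2 K1 pr (enc us) i = Some (us ! i)"
    "\<forall>us x. app2 K1 sn (enc us) x = Some (enc (us @ [x]))"
    unfolding K1_structure_def by (elim conjE exE)
  then have "K1_coding T F p enc p0 p1 lh pr sn" by unfold_locales simp_all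
  then show ?thesis by (rule that)
qed

context K1_coding
begin

lemma T_neq_F: "T \<noteq> F"
proof
  assume "T = F"
  with app_T[of 0 1] app_F[of 0 1] show False by simp
qed

lemma app_p_inj:
  assumes "app2 K1 p x y = app2 K1 p x' y'"
  shows "x = x' \<and> y = y'"
proof -
  obtain z where z: "app2 K1 p x y = Some z" using app_p_defined by blast
  with assms have "app2 K1 p x' y' = Some z" by simp
  with app_p0_p1[OF z] app_p0_p1[of x' y' z] show ?thesis by simp
qed

lemma univ_p0_p1:
  assumes "app2 K1 p x y = Some z"
  shows "univ p0 z = Some x" "univ p1 z = Some y"
  using app_p0_p1[OF assms] by (simp_all add: univ_K1)

lemma is_dialogue_take_eq:
  assumes "is_dialogue K1 f F p enc a b us" "is_dialogue K1 f F p enc a b us'"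
    and "i \<le> length us" "i \<le> length us'"
  shows "take i us = take i us'"
  using assms(3,4)
proof (induction i)
  case (Suc i)
  then have i: "i < length us" "i < length us'" by auto
  obtain v where v: "K1 a (enc (b # take i us)) = app2 K1 p F v" "f v = Some (us ! i)"
    using assms(1) i unfolding is_dialogue_def by blast
  obtain v' where v': "K1 a (enc (b # take i us')) = app2 K1 p F v'" "f v' = Some (us' ! i)"
    using assms(2) i unfolding is_dialogue_def by blast
  from Suc have "take i us = take i us'" by simp
  with v v' app_p_inj have "us ! i = us' ! i" by (metis option.inject)
  with \<open>take i us = take i us'\<close> i show ?case by (simp add: take_Suc_conv_app_nth)
qed simp

lemma is_dialogue_not_final:
  assumes "is_dialogue K1 f F p enc a b us" "is_dialogue K1 f F p enc a b us'"
    and "length us < length us'"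
  shows "K1 a (enc (b # us)) \<noteq> app2 K1 p T c"
proof
  have "take (length us) us' = us"
    using is_dialogue_take_eq[OF assms(1,2), of "length us"] assms(3) by simp
  moreover obtain v where "K1 a (enc (b # take (length us) us')) = app2 K1 p F v"
    using assms(2,3) unfolding is_dialogue_def by blast
  moreover assume "K1 a (enc (b # us)) = app2 K1 p T c"
  ultimately show False using app_p_inj T_neq_F by metis
qed

lemma rel_app_rel_unique:
  assumes "rel_app_rel K1 f T F p enc a b c" "rel_app_rel K1 f T F p enc a b c'"
  shows "c = c'"
proof -
  obtain us where us: "is_dialogue K1 f F p enc a b us" "K1 a (enc (b # us)) = app2 K1 p T c"
    using assms(1) unfolding rel_app_rel_def by blast
  obtain us' where us': "is_dialogue K1 f F p enc a b us'" "K1 a (enc (b # us')) = app2 K1 p T c'"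
    using assms(2) unfolding rel_app_rel_def by blast
  have "length us = length us'"
    using is_dialogue_not_final[OF us(1) us'(1)] is_dialogue_not_final[OF us'(1) us(1)] us(2) us'(2)
    by (metis linorder_neqE_nat)
  then have "us = us'" using is_dialogue_take_eq[OF us(1) us'(1), of "length us"] by simp
  with us us' show ?thesis using app_p_inj by metis
qed

lemma rel_app_eqI: "rel_app_rel K1 f T F p enc a b c \<Longrightarrow> rel_app K1 f T F p enc a b = Some c"
  unfolding rel_app_def using rel_app_rel_unique by (auto intro: the_equality)

lemma rel_app_SomeD: "rel_app K1 f T F p enc a b = Some c \<Longrightarrow> rel_app_rel K1 f T F p enc a b c"
  using rel_app_eqI unfolding rel_app_def by (metis option.distinct(1) option.inject)

section \<open>From \<open>K1[f]\<close> to \<open>K1^f\<close>\<close>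

definition transcript_start :: "nat \<Rightarrow> nat option" where
  "transcript_start z = univ2 sn (enc []) (nsnd z)"

definition transcript_extend :: "(nat \<Rightarrow> nat option) \<Rightarrow> nat \<Rightarrow> nat \<Rightarrow> nat \<Rightarrow> nat option" where
  "transcript_extend f a k s =
     Option.bind (univ a s) (\<lambda>w. Option.bind (univ p1 w) (\<lambda>v. Option.bind (f v) (\<lambda>u. univ2 sn s u)))"

definition transcript :: "(nat \<Rightarrow> nat option) \<Rightarrow> nat \<Rightarrow> nat \<Rightarrow> nat option" where
  "transcript f z n = bind_iter (transcript_extend f (nfst z)) n (transcript_start z)"

definition transcript_test :: "(nat \<Rightarrow> nat option) \<Rightarrow> nat \<Rightarrow> nat option" where
  "transcript_test f zn = Option.bind (transcript f (nfst zn) (nsnd zn)) (\<lambda>s.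
     Option.bind (univ (nfst (nfst zn)) s) (\<lambda>w. Option.bind (univ p0 w) (\<lambda>t. Some (if t = T then 0 else 1))))"

text \<open>On input \<langle>a, b\<rangle>, conduct the f-dialogue between a and b: keep extending the transcript
  enc (b # us) by the f-answer to the query v in a's reply \<langle>F, v\<rangle>, until a replies \<langle>T, c\<rangle>;
  then return c.\<close>

definition dialogue_value :: "(nat \<Rightarrow> nat option) \<Rightarrow> nat \<Rightarrow> nat option" where
  "dialogue_value f z = Option.bind (minimize (transcript_test f) z) (\<lambda>n.
     Option.bind (transcript f z n) (\<lambda>s. Option.bind (univ (nfst z) s) (\<lambda>w. univ p1 w)))"

lemma oracle_rec_dialogue_value: "oracle_rec dialogue_value"
proof -
  have "oracle_rec (\<lambda>f z. dialogue_value f z)"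
    unfolding dialogue_value_def transcript_test_def transcript_def transcript_extend_def
      transcript_start_def
    by (intro oracle_rec_intros oracle_rec_univ oracle_rec_univ2 total_rec_intros)
  then show ?thesis by simp
qed

lemma transcript_eq:
  assumes "is_dialogue K1 f F p enc a b us" "i \<le> length us"
  shows "transcript f \<langle>a, b\<rangle> i = Some (enc (b # take i us))"
  using assms(2)
proof (induction i)
  case 0
  have "univ2 sn (enc []) b = Some (enc [b])" using app_sn[of "[]" b] by (simp add: univ2_K1)
  then show ?case by (simp add: transcript_def transcript_start_def)
next
  case (Suc i)
  then have i: "i < length us" by simp
  obtain v where v: "K1 a (enc (b # take i us)) = app2 K1 p F v" "f v = Some (us ! i)"
    using assms(1) i unfolding is_dialogue_def by blast
  obtain w where w: "app2 K1 p F v = Some w" using app_p_defined by blast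
  have "univ a (enc (b # take i us)) = Some w" using v(1) w by (simp add: univ_K1)
  moreover have "univ p1 w = Some v" using univ_p0_p1[OF w] by simp
  moreover have "univ2 sn (enc (b # take i us)) (us ! i) = Some (enc (b # take (Suc i) us))"
    using app_sn[of "b # take i us" "us ! i"] i by (simp add: univ2_K1 take_Suc_conv_app_nth)
  ultimately show ?case
    using Suc v(2) by (simp add: transcript_def transcript_extend_def)
qed

lemma dialogue_value_eq:
  assumes "rel_app_rel K1 f T F p enc a b c"
  shows "dialogue_value f \<langle>a, b\<rangle> = Some c"
proof -
  obtain us where us: "is_dialogue K1 f F p enc a b us" and final: "K1 a (enc (b # us)) = app2 K1 p T c"
    using assms unfolding rel_app_rel_def by blast
  have test_F: "transcript_test f \<langle>\<langle>a, b\<rangle>, k\<rangle> = Some 1" if k: "k < length us" for k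
  proof -
    obtain v where v: "K1 a (enc (b # take k us)) = app2 K1 p F v"
      using us k unfolding is_dialogue_def by blast
    obtain w where w: "app2 K1 p F v = Some w" using app_p_defined by blast
    have "univ a (enc (b # take k us)) = Some w" using v w by (simp add: univ_K1)
    with univ_p0_p1[OF w] k T_neq_F show ?thesis
      by (simp add: transcript_test_def transcript_eq[OF us])
  qed
  obtain w where w: "app2 K1 p T c = Some w" using app_p_defined by blast
  have final_w: "univ a (enc (b # us)) = Some w" using final w by (simp add: univ_K1)
  have "transcript_test f \<langle>\<langle>a, b\<rangle>, length us\<rangle> = Some 0"
    using univ_p0_p1[OF w] final_w by (simp add: transcript_test_def transcript_eq[OF us])
  with test_F have "minimize (transcript_test f) \<langle>a, b\<rangle> = Some (length us)"
    by (intro minimize_eqI) auto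
  with univ_p0_p1[OF w] final_w show ?thesis
    by (simp add: dialogue_value_def transcript_eq[OF us])
qed

lemma applicative_morphism_rel_app_K1f:
  "applicative_morphism (rel_app K1 f T F p enc) (K1f f) (\<lambda>a. {a})"
proof -
  obtain C where C: "\<And>g z c. dialogue_value g z = Some c \<Longrightarrow> K1f g C z = Some c"
    using oracle_rec_K1f[OF oracle_rec_dialogue_value] by blast
  obtain S where S: "\<And>g a. K1f g S a = Some (smn C a)"
    using total_rec_K1f[OF total_rec_smn] by blast
  have "app2 (K1f f) S a b = Some c" if "rel_app K1 f T F p enc a b = Some c" for a b c
    using C[OF dialogue_value_eq[OF rel_app_SomeD[OF that]]] by (simp add: app2_def S K1f_smn)
  then show ?thesis unfolding applicative_morphism_def by auto
qed

section \<open>From \<open>K1^f\<close> to \<open>K1[f]\<close>\<close>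

text \<open>A final state s is \<open>Query v\<close> (nfst s = 3) or \<open>Ret y 0\<close>. Both candidate replies are
  computed (p is total), which avoids a conditional on partial values.\<close>

definition reply :: "nat \<Rightarrow> nat option" where
  "reply s = Option.bind (univ2 p F (nsnd s)) (\<lambda>q. Option.bind (univ2 p T (nfst (nsnd s)))
     (\<lambda>r. Some (if nfst s = 3 then q else r)))"

definition table_extend :: "nat \<Rightarrow> nat \<Rightarrow> nat \<Rightarrow> nat \<Rightarrow> nat option" where
  "table_extend z b k tb = Option.bind (interp tb (nfst z) b) (\<lambda>s.
     Option.bind (univ2 pr (nsnd z) (Suc k)) (\<lambda>u. Some (ncons \<langle>nsnd s, u\<rangle> tb)))"

text \<open>On input \<langle>a, enc (b # us)\<rangle>, rebuild the table pairing the interpreter's successive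
  queries on a and b with the answers us, rerun the interpreter with it, and reply \<langle>F, v\<rangle>
  if it gets stuck on the query v, or \<langle>T, y\<rangle> if it returns y.\<close>

definition replay :: "nat \<Rightarrow> nat option" where
  "replay z = Option.bind (univ lh (nsnd z)) (\<lambda>l. Option.bind (univ2 pr (nsnd z) 0) (\<lambda>b.
     Option.bind (bind_iter (table_extend z b) (l - 1) (Some 0)) (\<lambda>tb.
     Option.bind (interp tb (nfst z) b) reply)))"

definition replay_realizer :: "nat \<Rightarrow> nat \<Rightarrow> nat option" where
  "replay_realizer c w = Option.bind (univ2 pr w 0) (\<lambda>a. univ2 p T (smn c a))"

lemma oracle_rec_replay: "oracle_rec (\<lambda>f. replay)"
proof -
  have "oracle_rec (\<lambda>f z. replay z)"
    unfolding replay_def table_extend_def reply_def ncons_def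
    by (intro oracle_rec_intros oracle_rec_univ oracle_rec_univ2 oracle_rec_interp total_rec_intros)
  then show ?thesis by simp
qed

lemma oracle_rec_replay_realizer: "oracle_rec (\<lambda>f. replay_realizer c)"
proof -
  have "oracle_rec (\<lambda>f w. replay_realizer c w)"
    unfolding replay_realizer_def
    by (intro oracle_rec_bind oracle_rec_univ2 total_rec_comp[OF total_rec_smn] total_rec_intros)
  then show ?thesis by simp
qed

lemma reply_Query: "reply (Query v) = app2 K1 p F v"
proof -
  obtain q where q: "app2 K1 p F v = Some q" using app_p_defined by blast
  obtain r where "app2 K1 p T (nfst v) = Some r" using app_p_defined by blast
  with q show ?thesis by (simp add: reply_def Query_def univ2_K1)
qed

lemma reply_Ret: "reply (Ret y 0) = app2 K1 p T y"
proof -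
  obtain q where "app2 K1 p F \<langle>y, 0\<rangle> = Some q" using app_p_defined by blast
  moreover obtain r where "app2 K1 p T y = Some r" using app_p_defined by blast
  ultimately show ?thesis by (simp add: reply_def Ret_def univ2_K1)
qed

lemma bind_iter_table_extend:
  assumes "query_sequence f a b qs" "i \<le> length qs" "j \<le> i"
  shows "bind_iter (table_extend \<langle>a, enc (b # map (\<lambda>v. the (f v)) (take i qs))\<rangle> b) j (Some 0) =
    Some (table_code (answer_table f (take j qs)))"
  using assms(3)
proof (induction j)
  case 0
  then show ?case by (simp add: answer_table_def)
next
  case (Suc j)
  then have j: "j < length qs" "j < i" using assms(2) by auto
  have "interp (table_code (answer_table f (take j qs))) a b = Some (Query (qs ! j))"
    using assms(1) j unfolding query_sequence_def by simp
  moreover have "univ2 pr (enc (b # map (\<lambda>v. the (f v)) (take i qs))) (Suc j) = Some (the (f (qs ! j)))"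
    using app_pr[of "Suc j" "b # map (\<lambda>v. the (f v)) (take i qs)"] j by (simp add: univ2_K1)
  ultimately show ?case
    using Suc j by (simp add: table_extend_def Query_def take_Suc_conv_app_nth
        table_code_answer_table_snoc)
qed

lemma replay_eq:
  assumes "query_sequence f a b qs" "i \<le> length qs"
  shows "replay \<langle>a, enc (b # map (\<lambda>v. the (f v)) (take i qs))\<rangle> =
    Option.bind (interp (table_code (answer_table f (take i qs))) a b) reply"
proof -
  let ?w = "enc (b # map (\<lambda>v. the (f v)) (take i qs))"
  have "univ lh ?w = Some (Suc i)" using app_lh[of "b # _"] assms(2) by (simp add: univ_K1)
  moreover have "univ2 pr ?w 0 = Some b" using app_pr[of 0 "b # _"] by (simp add: univ2_K1)
  ultimately show ?thesis
    using bind_iter_table_extend[OF assms order_refl] by (simp add: replay_def)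
qed

lemma replay_dialogue:
  assumes C: "\<And>z r. replay z = Some r \<Longrightarrow> K1 C z = Some r" and "phi f a b = Some c"
  shows "rel_app_rel K1 f T F p enc (smn C a) b c"
proof -
  obtain qs where qs: "query_sequence f a b qs" "set qs \<subseteq> dom f"
    and final: "interp (table_code (answer_table f qs)) a b = Some (Ret c 0)"
    using query_sequence_exists[OF phi_SomeD[OF assms(2)]] by blast
  define us where "us = map (\<lambda>v. the (f v)) qs"
  have smn_replay: "K1 (smn C a) (enc (b # take i us)) = r"
    if "replay \<langle>a, enc (b # take i us)\<rangle> = r" "r \<noteq> None" for i r
    using K1f_smn[OF C[unfolded K1_def]] that unfolding K1_def by (cases r) auto
  have "K1 (smn C a) (enc (b # take i us)) = app2 K1 p F (qs ! i)" if i: "i < length us" for i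
  proof (rule smn_replay)
    show "replay \<langle>a, enc (b # take i us)\<rangle> = app2 K1 p F (qs ! i)"
      using replay_eq[OF qs(1), of i] qs(1) i
      by (simp add: us_def take_map query_sequence_def reply_Query)
  qed (use app_p_defined in auto)
  moreover have "f (qs ! i) = Some (us ! i)" if "i < length us" for i
  proof -
    have "qs ! i \<in> dom f" using qs(2) that by (simp add: us_def subset_iff)
    with that show ?thesis by (auto simp: us_def)
  qed
  ultimately have "is_dialogue K1 f F p enc (smn C a) b us"
    unfolding is_dialogue_def by blast
  moreover have "K1 (smn C a) (enc (b # us)) = app2 K1 p T c"
  proof -
    have "replay \<langle>a, enc (b # us)\<rangle> = app2 K1 p T c"
      using replay_eq[OF qs(1) order_refl] final by (simp add: us_def reply_Ret)
    then show ?thesis using smn_replay[of "length us"] app_p_defined by simp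
  qed
  ultimately show ?thesis unfolding rel_app_rel_def by blast
qed

lemma rel_app_replay_realizer:
  assumes R: "\<And>w r. replay_realizer C w = Some r \<Longrightarrow> K1 R w = Some r"
  shows "rel_app K1 f T F p enc R a = Some (smn C a)"
proof -
  obtain r where r: "app2 K1 p T (smn C a) = Some r" using app_p_defined by blast
  have "univ2 pr (enc [a]) 0 = Some a" using app_pr[of 0 "[a]"] by (simp add: univ2_K1)
  with r have "K1 R (enc [a]) = app2 K1 p T (smn C a)"
    by (simp add: R replay_realizer_def univ2_K1)
  then have "rel_app_rel K1 f T F p enc R a (smn C a)"
    unfolding rel_app_rel_def is_dialogue_def by (intro exI[of _ "[]"]) simp
  then show ?thesis by (rule rel_app_eqI)
qed

lemma applicative_morphism_K1f_rel_app:
  "applicative_morphism (K1f f) (rel_app K1 f T F p enc) (\<lambda>a. {a})"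
proof -
  obtain C where C: "\<And>z r. replay z = Some r \<Longrightarrow> K1 C z = Some r"
    using oracle_rec_K1f[OF oracle_rec_replay] unfolding K1_def by blast
  obtain R where R: "\<And>w r. replay_realizer C w = Some r \<Longrightarrow> K1 R w = Some r"
    using oracle_rec_K1f[OF oracle_rec_replay_realizer] unfolding K1_def by blast
  have "app2 (rel_app K1 f T F p enc) R a b = Some c" if "K1f f a b = Some c" for a b c
    using rel_app_eqI[OF replay_dialogue[OF C]] that rel_app_replay_realizer[OF R]
    by (simp add: app2_def K1f_def)
  then show ?thesis unfolding applicative_morphism_def by auto
qed

end

theorem mainTheorem5:
  fixes f :: "nat \<Rightarrow> nat option"
    and T F p :: nat and enc :: "nat list \<Rightarrow> nat"
  assumes "K1_structure T F p enc"
  shows "pca_isomorphic (K1f f) (rel_app K1 f T F p enc)"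
proof -
  obtain p0 p1 lh pr sn where "K1_coding T F p enc p0 p1 lh pr sn"
    using K1_structure_K1_coding[OF assms] .
  then interpret K1_coding T F p enc p0 p1 lh pr sn .
  have "morph_comp (\<lambda>a. {a}) (\<lambda>a. {a}) = (\<lambda>a :: nat. {a})"
    by (simp add: morph_comp_def)
  with applicative_morphism_K1f_rel_app applicative_morphism_rel_app_K1f show ?thesis
    unfolding pca_isomorphic_def by blast
qed

end
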